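(* Let $\mathcal{A}=\{\mathtt n,\mathtt e,\mathtt w,\mathtt s\}$. Consider the quadruple comb context tree on $\mathcal{A}$, whose contexts are the words $\alpha^k\beta$ with $\alpha,\beta\in\mathcal{A}$, $\alpha\neq\beta$, $k\geq1$, and for each context $c$ let $q_c$ be a probability measure on $\mathcal{A}$ with $q_c(\gamma)>0$ for all $c$ and all $\gamma\in\mathcal{A}$. Let $(U_n)_{n\geq0}$ be the associated variable length Markov chain (VLMC), started from a right-infinite word $U_0$ with $X_{-1}=\mathtt n$, $X_0=\mathtt e$, and for $n\geq0$ let $X_n$ be the first (leftmost) letter of $U_n$, so that $U_n=X_nX_{n-1}\cdots X_0X_{-1}\cdots$. Assume that for all $\alpha\neq\beta$ in $\mathcal{A}$, $\lim_{n\to\infty}\prod_{k=1}^n q_{\alpha^k\beta}(\alpha)=0$. Define the breaking times $B_0=0$, $B_{n+1}=\inf\{k>B_n: X_k\neq X_{k-1}\}$; the sojourn times $T_0=0$, $T_n=B_n-B_{n-1}$ for $n\geq1$; the internal chain $J_0=\mathtt n\mathtt e$ and $J_n=X_{B_{n-1}}X_{B_n}$ for $n\geq1$ (a two-letter word, called a bend); and the bend process $(Z_j)_{j\geq0}$ by $Z_0=\mathtt n\mathtt e$ and, for $j\geq1$, $Z_j=\alpha\beta$ where $\beta=X_j$ and $\alpha$ is the first letter different from $\beta$ in the sequence $X_{j-1},X_{j-2},\dots$. Then $(J_n,T_n)_{n\geq0}$ is a Markov renewal chain on the set of bends $\{\alpha\beta:\alpha,\beta\in\mathcal{A},\alpha\neq\beta\}$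 with semi-Markov kernel \[ p_{\beta\alpha,\alpha\gamma}(k)=\Big(\prod_{j=1}^{k-1}q_{\alpha^j\beta}(\alpha)\Big)\,q_{\alpha^k\beta}(\gamma)\qquad(\beta\neq\alpha,\ \gamma\neq\alpha,\ k\geq1), \] all other kernel entries being $0$; $(Z_j)_{j\geq0}$ is the semi-Markov chain associated with $(J_n,T_n)_{n\geq0}$; and $(J_n,B_n)_{n\geq0}$ is a Markov additive process.
   Context: A VLMC defined by a context tree $\mathcal{T}$ (a saturated tree of finite words on $\mathcal{A}$ with at most countably many infinite branches; contexts are its leaves and infinite branches) and probability measures $(q_c)_c$ indexed by the contexts is the Markov chain $(U_n)$ on right-infinite words over $\mathcal{A}$ with transitions $\mathbb{P}(U_{n+1}=\alpha U_n\mid U_n)=q_{\mathrm{pref}(U_n)}(\alpha)$, where $\mathrm{pref}(w)$ is the unique context that is a prefix of $w$ (for the quadruple comb, $\mathrm{pref}(w)=\alpha^k\beta$ when $w$ begins with exactly $k$ copies of $\alpha$ followed by $\beta\neq\alpha$). Letters are identified with the vectors $\mathtt e=(1,0)$, $\mathtt n=(0,1)$, $\mathtt w=-\mathtt e$, $\mathtt s=-\mathtt n$ of $\mathbb{Z}^2$, and $S_n=\sum_{\ell=1}^nX_\ell$ is the two-dimensional persistent random walk. A Markov chain $(J_n,T_n)_{n\geq0}$ on $E\times\mathbb{N}$ is a Markov renewal chain if $\mathbb{P}(J_{n+1}=b,T_{n+1}=k\mid J_n=a,T_n=j)=\mathbb{P}(J_{n+1}=b,T_{n+1}=k\mid J_n=a)=:p_{a,b}(k)$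 for all $n,a,b,j,k$, with $p_{a,b}(0)=0$; $(p_{a,b}(k))$ is its semi-Markov kernel. If $T_0=0$ and $B_n=\sum_{i=0}^nT_i$, the associated semi-Markov chain is $(Z_j)_{j\geq0}$ with $Z_j=J_n$ for $B_n\leq j<B_{n+1}$. A Markov chain $(J_n,B_n)_{n\geq0}$ on $E\times\mathbb{N}$ is a Markov additive process if $(J_n,B_n-B_{n-1})_n$ is a Markov renewal chain. *)

theory Defs
  imports "HOL-Probability.Probability"
begin

text \<open>The alphabet {n, e, w, s}; letters stand for the unit vectors of Z^2.\<close>
datatype letter = N | E | W | S

text \<open>A context alpha^k beta (alpha \<noteq> beta, k \<ge> 1) of the quadruple comb is encoded
  as the triple (alpha, k, beta).\<close>
type_synonym ctxw = "letter \<times> nat \<times> letter"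

definition is_context :: "ctxw \<Rightarrow> bool" where
  "is_context c \<longleftrightarrow> (case c of (\<alpha>, k, \<beta>) \<Rightarrow> \<alpha> \<noteq> \<beta> \<and> k \<ge> 1)"

definition ctx :: "letter list \<Rightarrow> ctxw" where
  "ctx w = (hd w, length (takeWhile (\<lambda>c. c = hd w) w),
            hd (dropWhile (\<lambda>c. c = hd w) w))"

text \<open>For a path x (with x 0 = X_0, and the fixed letter X_(-1) = n), past x m is the
  word X_m X_(m-1) ... X_0 X_(-1).  Since X_0 = e \<noteq> n = X_(-1), the ctxw prefix
  of U_m is determined by this finite word.\<close>
definition past :: "(nat \<Rightarrow> letter) \<Rightarrow> nat \<Rightarrow> letter list" where
  "past x m = map (\<lambda>i. x (m - i)) [0..<Suc m] @ [N]"

type_synonym bend = "letter \<times> letter"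

definition bends :: "bend set" where
  "bends = {(\<alpha>, \<beta>). \<alpha> \<noteq> \<beta>}"

definition sm_kernel :: "(ctxw \<Rightarrow> letter pmf) \<Rightarrow> bend \<Rightarrow> bend \<Rightarrow> nat \<Rightarrow> real" where
  "sm_kernel q a b k =
     (case a of (\<beta>, \<alpha>) \<Rightarrow> case b of (\<alpha>', \<gamma>) \<Rightarrow>
        if \<beta> \<noteq> \<alpha> \<and> \<alpha>' = \<alpha> \<and> \<gamma> \<noteq> \<alpha> \<and> k \<ge> 1
        then (\<Prod>j\<in>{1..<k}. pmf (q (\<alpha>, j, \<beta>)) \<alpha>) * pmf (q (\<alpha>, k, \<beta>)) \<gamma>
        else 0)"

text \<open>B_0 = 0, B_(n+1) = inf {k > B_n. X_k \<noteq> X_(k-1)} (inf of the empty set = \<infinity>).\<close>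
primrec brk :: "(nat \<Rightarrow> letter) \<Rightarrow> nat \<Rightarrow> enat" where
  "brk x 0 = 0"
| "brk x (Suc n) = Inf {enat k | k. brk x n < enat k \<and> x k \<noteq> x (k - 1)}"

definition soj :: "(nat \<Rightarrow> letter) \<Rightarrow> nat \<Rightarrow> enat" where
  "soj x n = (if n = 0 then 0 else brk x n - brk x (n - 1))"

definition at_time :: "(nat \<Rightarrow> letter) \<Rightarrow> enat \<Rightarrow> letter" where
  "at_time x t = (case t of enat k \<Rightarrow> x k | \<infinity> \<Rightarrow> undefined)"

definition bendJ :: "(nat \<Rightarrow> letter) \<Rightarrow> nat \<Rightarrow> bend" where
  "bendJ x n = (if n = 0 then (N, E)
                else (at_time x (brk x (n - 1)), at_time x (brk x n)))"

definition bendZ :: "(nat \<Rightarrow> letter) \<Rightarrow> nat \<Rightarrow> bend" where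
  "bendZ x j = (if j = 0 then (N, E)
                else (the (find (\<lambda>c. c \<noteq> x j) (past x (j - 1))), x j))"

definition markov_chain_on ::
  "'a measure \<Rightarrow> 's set \<Rightarrow> (nat \<Rightarrow> 'a \<Rightarrow> 's) \<Rightarrow> ('s \<Rightarrow> 's \<Rightarrow> real) \<Rightarrow> bool" where
  "markov_chain_on M St Y P \<longleftrightarrow>
     (\<forall>n. Y n \<in> M \<rightarrow>\<^sub>M count_space UNIV) \<and>
     (AE \<omega> in M. \<forall>n. Y n \<omega> \<in> St) \<and>
     (\<forall>n (h :: nat \<Rightarrow> 's) s. (\<forall>i\<le>n. h i \<in> St) \<longrightarrow> s \<in> St \<longrightarrow>
        measure M {\<omega> \<in> space M. (\<forall>i\<le>n. Y i \<omega> = h i) \<and> Y (Suc n) \<omega> = s}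
        = P (h n) s * measure M {\<omega> \<in> space M. \<forall>i\<le>n. Y i \<omega> = h i})"

text \<open>(J_n, T_n) is a Markov renewal chain on Est \<times> N with semi-Markov sm_kernel p:
  a Markov chain on Est \<times> N whose transition probability from (a, j) to (b, k) is
  p a b k (independent of j), with p a b 0 = 0.  The second component is enat-valued
  (breaking times may a priori be infinite); values in N are demanded almost surely.\<close>
definition markov_renewal_chain ::
  "'a measure \<Rightarrow> 'e set \<Rightarrow> (nat \<Rightarrow> 'a \<Rightarrow> 'e) \<Rightarrow> (nat \<Rightarrow> 'a \<Rightarrow> enat)
     \<Rightarrow> ('e \<Rightarrow> 'e \<Rightarrow> nat \<Rightarrow> real) \<Rightarrow> bool" where
  "markov_renewal_chain M Est J T p \<longleftrightarrow>
     (\<forall>a b. p a b 0 = 0) \<and>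
     markov_chain_on M (Est \<times> range enat) (\<lambda>n \<omega>. (J n \<omega>, T n \<omega>))
       (\<lambda>(a, j) (b, k). case k of enat k' \<Rightarrow> p a b k' | \<infinity> \<Rightarrow> 0)"

definition semi_markov_assoc ::
  "(nat \<Rightarrow> 'e) \<Rightarrow> (nat \<Rightarrow> enat) \<Rightarrow> (nat \<Rightarrow> 'e) \<Rightarrow> bool" where
  "semi_markov_assoc J T Z \<longleftrightarrow>
     T 0 = 0 \<and>
     (\<forall>n j. (\<Sum>i\<le>n. T i) \<le> enat j \<and> enat j < (\<Sum>i\<le>Suc n. T i) \<longrightarrow> Z j = J n)"

definition markov_additive ::
  "'a measure \<Rightarrow> 'e set \<Rightarrow> (nat \<Rightarrow> 'a \<Rightarrow> 'e) \<Rightarrow> (nat \<Rightarrow> 'a \<Rightarrow> enat)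
     \<Rightarrow> ('e \<Rightarrow> 'e \<Rightarrow> nat \<Rightarrow> real) \<Rightarrow> bool" where
  "markov_additive M Est J B p \<longleftrightarrow>
     (\<exists>P. markov_chain_on M (Est \<times> range enat) (\<lambda>n \<omega>. (J n \<omega>, B n \<omega>)) P) \<and>
     markov_renewal_chain M Est J
       (\<lambda>n \<omega>. if n = 0 then B 0 \<omega> else B n \<omega> - B (n - 1) \<omega>) p"

end

theory Submission
  imports Defs
begin

text \<open>
  Between two breaking times the walk repeats one letter \<open>\<alpha>\<close>, and while it does so the
  VLMC reads the contexts \<open>\<alpha>\<^sup>j\<beta>\<close>, where \<open>\<beta>\<close> is the letter before the run. So the
  cylinder of a path up to its \<open>n\<close>-th breaking time, which is exactly the event fixed by the
  history of \<open>(J\<^sub>i, B\<^sub>i)\<^bsub>i\<le>n\<^esub>\<close>, splits according to the length \<open>k\<close> and the exit letter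
  \<open>\<gamma>\<close> of the next run into cylinders whose probabilities carry the factor
  \<open>(\<Prod>j<k. q\<^bsub>\<alpha>\<^sup>j\<beta>\<^esub>(\<alpha>)) q\<^bsub>\<alpha>\<^sup>k\<beta>\<^esub>(\<gamma>)\<close>. It depends on the past only through the current
  bend \<open>\<beta>\<alpha>\<close>, so \<open>(J, B)\<close> is a Markov chain; the hypothesis on the infinite products makes
  every run finite almost surely. Passing to increments gives the renewal property of
  \<open>(J, T)\<close>, and \<open>Z\<close> is constant, equal to the current bend, on every run.
\<close>

instance letter :: countable by countable_datatype

section \<open>Increments of extended natural sequences\<close>

lemma enat_diff_eq_enat_iff: "enat a \<le> x \<Longrightarrow> x - enat a = enat k \<longleftrightarrow> x = enat (a + k)"
  by (cases x) auto

lemma sum_increments_enat: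
  fixes B T :: "nat \<Rightarrow> enat"
  assumes "\<And>i. B i \<le> B (Suc i)" "T 0 = B 0" "\<And>i. T (Suc i) = B (Suc i) - B i"
  shows "(\<Sum>i\<le>n. T i) = B n"
proof (induction n)
  case (Suc n)
  have "B n + (B (Suc n) - B n) = B (Suc n)"
    using assms(1)[of n] by (cases "B n"; cases "B (Suc n)") simp_all
  with Suc show ?case
    by (simp add: assms(3))
qed (simp add: assms(2))

lemma increments_eq_iff_partial_sums_eq:
  fixes B T :: "nat \<Rightarrow> enat"
  assumes "\<And>i. B i \<le> B (Suc i)" "T 0 = B 0" "\<And>i. T (Suc i) = B (Suc i) - B i"
  shows "(\<forall>i\<le>n. T i = enat (t i)) \<longleftrightarrow> (\<forall>i\<le>n. B i = enat (\<Sum>l\<le>i. t l))"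
proof (induction n)
  case (Suc n)
  have split: "\<And>P. (\<forall>i\<le>Suc n. P i) \<longleftrightarrow> (\<forall>i\<le>n. P i) \<and> P (Suc n)"
    by (auto simp: le_Suc_eq)
  have "T (Suc n) = enat (t (Suc n)) \<longleftrightarrow> B (Suc n) = enat (\<Sum>l\<le>Suc n. t l)"
    if "B n = enat (\<Sum>l\<le>n. t l)"
    using enat_diff_eq_enat_iff[of "\<Sum>l\<le>n. t l" "B (Suc n)" "t (Suc n)"] assms(1)[of n] that
    by (simp add: assms(3))
  then show ?case
    unfolding split Suc.IH by auto
qed (simp add: assms(2))

lemma increments_history_iff:
  fixes B T :: "nat \<Rightarrow> enat"
  assumes "\<And>i. B i \<le> B (Suc i)" "T 0 = B 0" "\<And>i. T (Suc i) = B (Suc i) - B i"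
    and "\<forall>i\<le>n. snd (h i) \<in> range enat"
  shows "(\<forall>i\<le>n. (J i, T i) = h i) \<longleftrightarrow>
    (\<forall>i\<le>n. (J i, B i) = (fst (h i), enat (\<Sum>l\<le>i. the_enat (snd (h l)))))"
proof -
  have h_eq: "h i = (fst (h i), enat (the_enat (snd (h i))))" if i: "i \<le> n" for i
  proof -
    obtain k where "snd (h i) = enat k"
      using assms(4) i by auto
    then show ?thesis
      by (simp add: prod_eq_iff)
  qed
  have "(\<forall>i\<le>n. (J i, T i) = h i) \<longleftrightarrow>
      (\<forall>i\<le>n. J i = fst (h i)) \<and> (\<forall>i\<le>n. T i = enat (the_enat (snd (h i))))"
    using h_eq by (metis prod.inject)
  also have "\<dots> \<longleftrightarrow> (\<forall>i\<le>n. J i = fst (h i)) \<and> (\<forall>i\<le>n. B i = enat (\<Sum>l\<le>i. the_enat (snd (h l))))"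
    using increments_eq_iff_partial_sums_eq[OF assms(1-3)] by simp
  finally show ?thesis
    by auto
qed

section \<open>Breaking times of a path\<close>

declare brk.simps(2) [simp del]

lemma brk_Suc_le_if_change:
  assumes "brk y n < enat k" "y k \<noteq> y (k - 1)"
  shows "brk y (Suc n) \<le> enat k"
  unfolding brk.simps(2) using assms by (intro Inf_lower) blast

lemma brk_Suc_eq_enatD:
  assumes "brk y (Suc n) = enat m"
  shows "brk y n < enat m" "y m \<noteq> y (m - 1)"
proof -
  let ?S = "{enat k | k. brk y n < enat k \<and> y k \<noteq> y (k - 1)}"
  have "?S \<noteq> {}"
  proof
    assume "?S = {}"
    then have "brk y (Suc n) = \<infinity>"
      by (simp only: brk.simps(2) Inf_empty top_enat_def)
    with assms show False
      by simp
  qed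
  then have "Inf ?S \<in> ?S"
    by (meson ex_in_conv wellorder_InfI)
  then have "enat m \<in> ?S"
    using assms by (simp only: brk.simps(2))
  then show "brk y n < enat m" "y m \<noteq> y (m - 1)"
    by auto
qed

lemma brk_mono_Suc: "brk y n \<le> brk y (Suc n)"
  unfolding brk.simps(2) by (rule Inf_greatest) auto

lemma brk_mono: "i \<le> n \<Longrightarrow> brk y i \<le> brk y n"
  by (rule lift_Suc_mono_le[of "brk y"]) (simp_all add: brk_mono_Suc)

lemma const_between_brk:
  assumes "brk y n = enat a" "a \<le> i" "enat i < brk y (Suc n)"
  shows "y i = y a"
  using assms(2,3)
proof (induction i)
  case (Suc i)
  show ?case
  proof (cases "a = Suc i")
    case False
    then have "a \<le> i" "brk y n < enat (Suc i)"
      using Suc.prems(1) assms(1) by auto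
    moreover have "enat i < brk y (Suc n)"
      by (rule order.strict_trans[OF _ Suc.prems(2)]) simp
    moreover have "y (Suc i) = y i"
      using brk_Suc_le_if_change[of y n "Suc i"] calculation(2) Suc.prems(2) by force
    ultimately show ?thesis
      using Suc.IH by simp
  qed simp
qed simp

lemma brk_Suc_eq_enat_iff:
  assumes "brk y n = enat a"
  shows "brk y (Suc n) = enat b \<longleftrightarrow> a < b \<and> y b \<noteq> y a \<and> (\<forall>i. a \<le> i \<longrightarrow> i < b \<longrightarrow> y i = y a)"
proof (intro iffI conjI allI impI)
  assume b: "brk y (Suc n) = enat b"
  show "a < b"
    using brk_Suc_eq_enatD(1)[OF b] assms by simp
  show run: "y i = y a" if "a \<le> i" "i < b" for i
    using that b by (intro const_between_brk[OF assms]) auto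
  have "y (b - 1) = y a"
    using \<open>a < b\<close> by (intro run) auto
  then show "y b \<noteq> y a"
    using brk_Suc_eq_enatD(2)[OF b] by simp
next
  assume "a < b \<and> y b \<noteq> y a \<and> (\<forall>i. a \<le> i \<longrightarrow> i < b \<longrightarrow> y i = y a)"
  then have ab: "a < b" and yb: "y b \<noteq> y a" and run: "\<And>i. a \<le> i \<Longrightarrow> i < b \<Longrightarrow> y i = y a"
    by blast+
  have "y (b - 1) = y a"
    using ab by (intro run) auto
  then have "brk y (Suc n) \<le> enat b"
    using assms ab yb by (intro brk_Suc_le_if_change) auto
  then obtain c where c: "brk y (Suc n) = enat c" "c \<le> b"
    by (cases "brk y (Suc n)") auto
  have "\<not> c < b"
  proof
    assume "c < b"
    have "a < c" "y c \<noteq> y (c - 1)"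
      using brk_Suc_eq_enatD[OF c(1)] assms by auto
    moreover have "y c = y a" "y (c - 1) = y a"
      using \<open>c < b\<close> \<open>a < c\<close> by (auto intro: run)
    ultimately show False
      by simp
  qed
  with c show "brk y (Suc n) = enat b"
    by simp
qed

lemma brk_eq_enat_if_prefix_eq:
  assumes "brk y n = enat m" "\<And>i. i \<le> m \<Longrightarrow> z i = y i"
  shows "brk z n = enat m"
  using assms
proof (induction n arbitrary: m)
  case (Suc n)
  obtain a where a: "brk y n = enat a" "a < m"
    using brk_Suc_eq_enatD(1)[OF Suc.prems(1)] by (cases "brk y n") auto
  then have z_a: "brk z n = enat a"
    using Suc.prems(2) by (intro Suc.IH) auto
  have "y m \<noteq> y a" and run: "\<And>i. a \<le> i \<Longrightarrow> i < m \<Longrightarrow> y i = y a"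
    using Suc.prems(1) unfolding brk_Suc_eq_enat_iff[OF a(1)] by blast+
  show ?case
    unfolding brk_Suc_eq_enat_iff[OF z_a]
  proof (intro conjI allI impI)
    show "a < m" "z m \<noteq> z a"
      using \<open>y m \<noteq> y a\<close> a(2) Suc.prems(2) by simp_all
    fix i
    assume "a \<le> i" "i < m"
    then show "z i = z a"
      using run[of i] Suc.prems(2)[of i] Suc.prems(2)[of a] a(2) by simp
  qed
qed (simp add: zero_enat_def)

lemma bendJ_Suc:
  "brk y n = enat a \<Longrightarrow> brk y (Suc n) = enat b \<Longrightarrow> bendJ y (Suc n) = (y a, y b)"
  by (simp add: bendJ_def at_time_def)

lemma brk_bendJ_Suc_iff:
  assumes "brk y n = enat m"
  shows "brk y (Suc n) = enat l \<and> bendJ y (Suc n) = b \<longleftrightarrow>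
    m < l \<and> (\<forall>i. m \<le> i \<longrightarrow> i < l \<longrightarrow> y i = y m) \<and> y l \<noteq> y m \<and> b = (y m, y l)"
  using brk_Suc_eq_enat_iff[OF assms, of l] bendJ_Suc[OF assms, of l] by blast

definition prev_letter :: "(nat \<Rightarrow> letter) \<Rightarrow> nat \<Rightarrow> letter" where
  "prev_letter y m = (if m = 0 then N else y (m - 1))"

definition past_before :: "(nat \<Rightarrow> letter) \<Rightarrow> nat \<Rightarrow> letter list" where
  "past_before y m = rev (map y [0..<m]) @ [N]"

lemma past_eq_past_before: "past y i = past_before y (Suc i)"
proof -
  have "map (\<lambda>j. y (i - j)) [0..<Suc i] = rev (map y [0..<Suc i])"
    by (rule nth_equalityI) (simp_all add: rev_nth del: upt_Suc)
  then show ?thesis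
    by (simp add: past_def past_before_def del: upt_Suc)
qed

lemma past_before_Suc: "past_before y (Suc m) = y m # past_before y m"
  by (simp add: past_before_def)

lemma past_before_Cons: "past_before y m = prev_letter y m # tl (past_before y m)"
  by (cases m) (simp_all add: past_before_def prev_letter_def)

lemma past_before_run:
  "(\<And>i. m \<le> i \<Longrightarrow> i < m + r \<Longrightarrow> y i = \<alpha>) \<Longrightarrow>
    past_before y (m + r) = replicate r \<alpha> @ past_before y m"
  by (induction r) (simp_all add: past_before_Suc)

lemma ctx_past_run:
  assumes "prev_letter y m \<noteq> \<alpha>" "\<And>i. m \<le> i \<Longrightarrow> i \<le> m + k \<Longrightarrow> y i = \<alpha>"
  shows "ctx (past y (m + k)) = (\<alpha>, Suc k, prev_letter y m)"
proof -
  have "past y (m + k) = replicate (Suc k) \<alpha> @ prev_letter y m # tl (past_before y m)"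
    using past_before_run[of m "Suc k" y \<alpha>] assms(2) past_before_Cons[of y m]
    by (simp add: past_eq_past_before)
  then show ?thesis
    using assms(1) by (simp add: ctx_def takeWhile_append dropWhile_append)
qed

lemma bendJ_eq_prev_letter:
  assumes "y 0 = E" "brk y n = enat m"
  shows "bendJ y n = (prev_letter y m, y m)" "prev_letter y m \<noteq> y m"
proof -
  have "bendJ y n = (prev_letter y m, y m) \<and> prev_letter y m \<noteq> y m"
  proof (cases n)
    case 0
    then show ?thesis
      using assms by (simp add: bendJ_def prev_letter_def zero_enat_def)
  next
    case (Suc n')
    then have m: "brk y (Suc n') = enat m"
      using assms(2) by simp
    obtain a where a: "brk y n' = enat a"
      using brk_Suc_eq_enatD(1)[OF m] by (cases "brk y n'") auto
    have "a < m" "y m \<noteq> y a"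
      using m unfolding brk_Suc_eq_enat_iff[OF a] by blast+
    moreover have "y (m - 1) = y a"
      using const_between_brk[OF a, of "m - 1"] m \<open>a < m\<close> by simp
    ultimately show ?thesis
      using bendJ_Suc[OF a m] Suc by (simp add: prev_letter_def)
  qed
  then show "bendJ y n = (prev_letter y m, y m)" "prev_letter y m \<noteq> y m"
    by simp_all
qed

lemma bendJ_brk_eq_if_prefix_eq:
  assumes "y 0 = E" "z 0 = E" "brk y n = enat m" "\<forall>i\<le>m. z i = y i" "i \<le> n"
  shows "bendJ z i = bendJ y i" "brk z i = brk y i"
proof -
  obtain l where l: "brk y i = enat l" "l \<le> m"
    using brk_mono[OF assms(5), of y] assms(3) by (cases "brk y i") auto
  then have z_l: "brk z i = enat l"
    using assms(4) by (intro brk_eq_enat_if_prefix_eq[OF l(1)]) auto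
  moreover have "prev_letter z l = prev_letter y l" "z l = y l"
    using assms(4) l(2) by (auto simp: prev_letter_def)
  ultimately show "bendJ z i = bendJ y i" "brk z i = brk y i"
    using bendJ_eq_prev_letter(1)[OF assms(1) l(1)] bendJ_eq_prev_letter(1)[of z, OF assms(2) z_l] l(1)
    by simp_all
qed

lemma prefix_eq_if_bendJ_brk_eq:
  assumes "y 0 = E" "z 0 = E" "brk y n = enat m" "\<forall>i\<le>n. bendJ z i = bendJ y i \<and> brk z i = brk y i"
  shows "\<forall>i\<le>m. z i = y i"
  using assms(3,4)
proof (induction n arbitrary: m)
  case 0
  then show ?case
    using assms(1,2) by (simp add: zero_enat_def)
next
  case (Suc n)
  obtain a where a: "brk y n = enat a"
    using brk_Suc_eq_enatD(1)[OF Suc.prems(1)] by (cases "brk y n") auto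
  have below: "\<forall>i\<le>a. z i = y i"
    using Suc.prems(2) a by (intro Suc.IH) auto
  have z_brk: "brk z n = enat a" "brk z (Suc n) = enat m"
    using Suc.prems a by auto
  have last: "z m = y m"
    using Suc.prems bendJ_Suc[OF z_brk] bendJ_Suc[OF a Suc.prems(1)] by auto
  have mid: "z i = y i" if "a \<le> i" "i < m" for i
  proof -
    have "z i = z a"
      using that z_brk(2) by (intro const_between_brk[OF z_brk(1)]) auto
    moreover have "y i = y a"
      using that Suc.prems(1) by (intro const_between_brk[OF a]) auto
    moreover have "z a = y a"
      using below by blast
    ultimately show ?thesis
      by simp
  qed
  show ?case
  proof (intro allI impI)
    fix i
    assume "i \<le> m"
    then consider "i \<le> a" | "a \<le> i" "i < m" | "i = m"
      by linarith
    then show "z i = y i"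
      using below mid last by cases auto
  qed
qed

lemma prefix_eq_iff_bendJ_brk_eq:
  assumes "y 0 = E" "z 0 = E" "brk y n = enat m"
  shows "(\<forall>i\<le>m. z i = y i) \<longleftrightarrow> (\<forall>i\<le>n. bendJ z i = bendJ y i \<and> brk z i = brk y i)"
  using bendJ_brk_eq_if_prefix_eq[of y z n m, OF assms] prefix_eq_if_bendJ_brk_eq[of y z n m, OF assms]
  by blast

lemma find_replicate_Cons:
  "\<beta> \<noteq> \<alpha> \<Longrightarrow> find (\<lambda>c. c \<noteq> \<alpha>) (replicate r \<alpha> @ \<beta> # w) = Some \<beta>"
  by (induction r) auto

lemma bendZ_eq_bendJ:
  assumes "y 0 = E" "brk y n \<le> enat j" "enat j < brk y (Suc n)"
  shows "bendZ y j = bendJ y n"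
proof -
  obtain m where m: "brk y n = enat m" "m \<le> j"
    using assms(2) by (cases "brk y n") auto
  have run: "y i = y m" if "m \<le> i" "i \<le> j" for i
    using that le_less_trans[of "enat i" "enat j"] assms(3) by (intro const_between_brk[OF m(1)]) auto
  show ?thesis
  proof (cases j)
    case 0
    have "n = 0"
    proof (rule ccontr)
      assume "n \<noteq> 0"
      then obtain n' where "n = Suc n'"
        using not0_implies_Suc by blast
      then have "brk y n' < enat 0"
        using m 0 by (intro brk_Suc_eq_enatD(1)) simp
      then show False
        by (cases "brk y n'") auto
    qed
    with 0 show ?thesis
      by (simp add: bendZ_def bendJ_def)
  next
    case (Suc j')
    have "past_before y (m + (j - m)) = replicate (j - m) (y m) @ past_before y m"
      by (rule past_before_run) (auto intro: run)
    then have "past y j' = replicate (j - m) (y m) @ prev_letter y m # tl (past_before y m)"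
      using past_before_Cons[of y m] m(2) Suc by (simp add: past_eq_past_before)
    then have "find (\<lambda>c. c \<noteq> y j) (past y j') = Some (prev_letter y m)"
      using find_replicate_Cons bendJ_eq_prev_letter(2)[OF assms(1) m(1)] run[of j] m(2) by simp
    then show ?thesis
      using Suc bendJ_eq_prev_letter(1)[OF assms(1) m(1)] run[of j] m(2) by (simp add: bendZ_def)
  qed
qed

lemma semi_markov_assoc_bendZ:
  assumes "y 0 = E"
  shows "semi_markov_assoc (bendJ y) (soj y) (bendZ y)"
proof -
  have sum_soj: "(\<Sum>i\<le>n. soj y i) = brk y n" for n
    by (rule sum_increments_enat[of "brk y", OF brk_mono_Suc]) (simp_all add: soj_def)
  show ?thesis
    unfolding semi_markov_assoc_def sum_soj using bendZ_eq_bendJ[of y, OF assms] by (simp add: soj_def)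
qed

section \<open>Markov additive processes\<close>

lemma measurable_count_space_apply2:
  fixes f :: "'a \<Rightarrow> 'b::countable" and g :: "'a \<Rightarrow> 'c::countable"
  assumes "f \<in> M \<rightarrow>\<^sub>M count_space UNIV" "g \<in> M \<rightarrow>\<^sub>M count_space UNIV"
  shows "(\<lambda>x. h (f x) (g x)) \<in> M \<rightarrow>\<^sub>M count_space UNIV"
  by (rule measurable_compose_countable[OF measurable_compose_countable[OF measurable_const] assms(1)])
    (use assms(2) in auto)

text \<open>Transition law of \<open>(J\<^sub>n, B\<^sub>n)\<close>; for \<open>k < j\<close> the truncated difference yields
  \<open>p a b 0\<close>, which vanishes for a semi-Markov kernel.\<close>
definition additive_kernel :: "('e \<Rightarrow> 'e \<Rightarrow> nat \<Rightarrow> real) \<Rightarrow> 'e \<times> enat \<Rightarrow> 'e \<times> enat \<Rightarrow> real" where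
  "additive_kernel p = (\<lambda>(a, j) (b, k). case (j, k) of (enat j', enat k') \<Rightarrow> p a b (k' - j') | _ \<Rightarrow> 0)"

lemma increments_transition:
  fixes J :: "nat \<Rightarrow> 'a \<Rightarrow> 'e" and B T :: "nat \<Rightarrow> 'a \<Rightarrow> enat"
  assumes B_mono: "\<And>n \<omega>. B n \<omega> \<le> B (Suc n) \<omega>"
    and T_0: "\<And>\<omega>. T 0 \<omega> = B 0 \<omega>" and T_Suc: "\<And>n \<omega>. T (Suc n) \<omega> = B (Suc n) \<omega> - B n \<omega>"
    and JB_trans: "\<And>h s. \<forall>i\<le>n. h i \<in> Est \<times> range enat \<Longrightarrow> s \<in> Est \<times> range enat \<Longrightarrow>
      measure M {\<omega> \<in> space M. (\<forall>i\<le>n. (J i \<omega>, B i \<omega>) = h i) \<and> (J (Suc n) \<omega>, B (Suc n) \<omega>) = s}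
      = additive_kernel p (h n) s * measure M {\<omega> \<in> space M. \<forall>i\<le>n. (J i \<omega>, B i \<omega>) = h i}"
    and h: "\<forall>i\<le>n. h i \<in> Est \<times> range enat" and s: "s \<in> Est \<times> range enat"
  shows "measure M {\<omega> \<in> space M. (\<forall>i\<le>n. (J i \<omega>, T i \<omega>) = h i) \<and> (J (Suc n) \<omega>, T (Suc n) \<omega>) = s}
    = (\<lambda>(a, j) (b, k). case k of enat k' \<Rightarrow> p a b k' | \<infinity> \<Rightarrow> 0) (h n) s
      * measure M {\<omega> \<in> space M. \<forall>i\<le>n. (J i \<omega>, T i \<omega>) = h i}"
proof -
  define S where "S i = (\<Sum>l\<le>i. the_enat (snd (h l)))" for i
  define h' where "h' i = (fst (h i), enat (S i))" for i
  obtain b k where s_eq: "s = (b, enat k)" and "b \<in> Est"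
    using s by auto
  have "\<forall>i\<le>n. snd (h i) \<in> range enat"
    using h by auto
  then have hist: "(\<forall>i\<le>n. (J i \<omega>, T i \<omega>) = h i) \<longleftrightarrow> (\<forall>i\<le>n. (J i \<omega>, B i \<omega>) = h' i)" for \<omega>
    unfolding h'_def S_def
    by (rule increments_history_iff[of "\<lambda>i. B i \<omega>" "\<lambda>i. T i \<omega>" n h "\<lambda>i. J i \<omega>", OF B_mono T_0 T_Suc])
  have step: "(J (Suc n) \<omega>, T (Suc n) \<omega>) = s \<longleftrightarrow> (J (Suc n) \<omega>, B (Suc n) \<omega>) = (b, enat (S n + k))"
    if "\<forall>i\<le>n. (J i \<omega>, B i \<omega>) = h' i" for \<omega>
  proof -
    have "B n \<omega> = enat (S n)"
      using that by (simp add: h'_def)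
    then show ?thesis
      using enat_diff_eq_enat_iff[of "S n" "B (Suc n) \<omega>" k] B_mono[of n \<omega>] by (simp add: s_eq T_Suc)
  qed
  have h': "\<forall>i\<le>n. h' i \<in> Est \<times> range enat"
    using h by (auto simp: h'_def)
  have kernel: "additive_kernel p (h' n) (b, enat (S n + k))
      = (\<lambda>(a, j) (b, k). case k of enat k' \<Rightarrow> p a b k' | \<infinity> \<Rightarrow> 0) (h n) s"
    by (simp add: additive_kernel_def h'_def s_eq case_prod_beta)
  have "{\<omega> \<in> space M. (\<forall>i\<le>n. (J i \<omega>, T i \<omega>) = h i) \<and> (J (Suc n) \<omega>, T (Suc n) \<omega>) = s}
      = {\<omega> \<in> space M. (\<forall>i\<le>n. (J i \<omega>, B i \<omega>) = h' i)
                      \<and> (J (Suc n) \<omega>, B (Suc n) \<omega>) = (b, enat (S n + k))}"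
    using hist step by blast
  moreover have "{\<omega> \<in> space M. \<forall>i\<le>n. (J i \<omega>, B i \<omega>) = h' i}
      = {\<omega> \<in> space M. \<forall>i\<le>n. (J i \<omega>, T i \<omega>) = h i}"
    using hist by blast
  moreover have "(b, enat (S n + k)) \<in> Est \<times> range enat"
    using \<open>b \<in> Est\<close> by simp
  ultimately show ?thesis
    using JB_trans[OF h'] unfolding kernel[symmetric] by (simp only:)
qed

lemma markov_additiveI:
  fixes J :: "nat \<Rightarrow> 'a \<Rightarrow> 'e::countable" and B :: "nat \<Rightarrow> 'a \<Rightarrow> enat"
  assumes p0: "\<And>a b. p a b 0 = 0"
    and B_mono: "\<And>n \<omega>. B n \<omega> \<le> B (Suc n) \<omega>"
    and chain: "markov_chain_on M (Est \<times> range enat) (\<lambda>n \<omega>. (J n \<omega>, B n \<omega>)) (additive_kernel p)"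
  shows "markov_additive M Est J B p"
proof -
  define T where "T = (\<lambda>n \<omega>. if n = 0 then B 0 \<omega> else B n \<omega> - B (n - 1) \<omega>)"
  have T_0: "T 0 \<omega> = B 0 \<omega>" and T_Suc: "T (Suc n) \<omega> = B (Suc n) \<omega> - B n \<omega>" for n \<omega>
    by (simp_all add: T_def)
  note chain_parts = chain[unfolded markov_chain_on_def]
  have JB_meas: "\<And>n. (\<lambda>\<omega>. (J n \<omega>, B n \<omega>)) \<in> M \<rightarrow>\<^sub>M count_space UNIV"
    by (rule chain_parts[THEN conjunct1, rule_format])
  have "markov_chain_on M (Est \<times> range enat) (\<lambda>n \<omega>. (J n \<omega>, T n \<omega>))
      (\<lambda>(a, j) (b, k). case k of enat k' \<Rightarrow> p a b k' | \<infinity> \<Rightarrow> 0)"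
    unfolding markov_chain_on_def
  proof (intro conjI allI impI)
    fix n
    have "(\<lambda>\<omega>. (\<lambda>(a, j) (_, i). (a, if n = 0 then j else j - i)) (J n \<omega>, B n \<omega>) (J (n - 1) \<omega>, B (n - 1) \<omega>))
        \<in> M \<rightarrow>\<^sub>M count_space UNIV"
      by (rule measurable_count_space_apply2[OF JB_meas JB_meas])
    then show "(\<lambda>\<omega>. (J n \<omega>, T n \<omega>)) \<in> M \<rightarrow>\<^sub>M count_space UNIV"
      by (simp add: T_def cong: if_cong)
  next
    show "AE \<omega> in M. \<forall>n. (J n \<omega>, T n \<omega>) \<in> Est \<times> range enat"
      using chain_parts[THEN conjunct2, THEN conjunct1]
    proof eventually_elim
      case (elim \<omega>)
      have "T n \<omega> \<in> range enat" for n
        using elim[rule_format, of n] elim[rule_format, of "n - 1"] by (auto simp: T_def)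
      with elim show ?case
        by blast
    qed
  next
    fix n :: nat and h :: "nat \<Rightarrow> 'e \<times> enat" and s :: "'e \<times> enat"
    assume "\<forall>i\<le>n. h i \<in> Est \<times> range enat" "s \<in> Est \<times> range enat"
    then show "measure M {\<omega> \<in> space M. (\<forall>i\<le>n. (J i \<omega>, T i \<omega>) = h i) \<and> (J (Suc n) \<omega>, T (Suc n) \<omega>) = s}
        = (\<lambda>(a, j) (b, k). case k of enat k' \<Rightarrow> p a b k' | \<infinity> \<Rightarrow> 0) (h n) s
          * measure M {\<omega> \<in> space M. \<forall>i\<le>n. (J i \<omega>, T i \<omega>) = h i}"
      using chain_parts[THEN conjunct2, THEN conjunct2]
      by (intro increments_transition[OF B_mono T_0 T_Suc]) auto
  qed
  then show ?thesis
    unfolding markov_additive_def markov_renewal_chain_def T_def[symmetric]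
    using chain p0 by blast
qed

section \<open>The quadruple comb VLMC\<close>

locale comb_vlmc = prob_space M for M :: "'a measure" +
  fixes X :: "nat \<Rightarrow> 'a \<Rightarrow> letter" and q :: "ctxw \<Rightarrow> letter pmf"
  assumes q_lim: "\<And>\<alpha> \<beta>. \<alpha> \<noteq> \<beta> \<Longrightarrow> (\<lambda>n. \<Prod>k\<in>{1..n}. pmf (q (\<alpha>, k, \<beta>)) \<alpha>) \<longlonglongrightarrow> 0"
    and X_meas [measurable]: "\<And>n. X n \<in> M \<rightarrow>\<^sub>M count_space UNIV"
    and X0: "\<And>\<omega>. \<omega> \<in> space M \<Longrightarrow> X 0 \<omega> = E"
    and vlmc: "\<And>n x. x 0 = E \<Longrightarrow>
      measure M {\<omega> \<in> space M. \<forall>i\<le>n. X i \<omega> = x i} = (\<Prod>i<n. pmf (q (ctx (past x i))) (x (Suc i)))"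
begin

abbreviation path :: "'a \<Rightarrow> nat \<Rightarrow> letter" where
  "path \<omega> \<equiv> \<lambda>i. X i \<omega>"

definition cylinder :: "(nat \<Rightarrow> letter) \<Rightarrow> nat \<Rightarrow> 'a set" where
  "cylinder y m = {\<omega> \<in> space M. \<forall>i\<le>m. X i \<omega> = y i}"

lemma sets_cylinder [measurable]: "cylinder y m \<in> sets M"
  unfolding cylinder_def by measurable

lemma cylinder_cong: "(\<And>i. i \<le> m \<Longrightarrow> z i = y i) \<Longrightarrow> cylinder z m = cylinder y m"
  by (simp add: cylinder_def)

lemma measure_cylinder_Suc:
  "y 0 = E \<Longrightarrow>
    measure M (cylinder y (Suc m)) = measure M (cylinder y m) * pmf (q (ctx (past y m))) (y (Suc m))"
  by (simp add: cylinder_def vlmc)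

lemma measure_cylinder_run:
  assumes "y 0 = E" "prev_letter y m \<noteq> \<alpha>" "\<And>i. m \<le> i \<Longrightarrow> i \<le> m + k \<Longrightarrow> y i = \<alpha>"
  shows "measure M (cylinder y (m + k))
    = measure M (cylinder y m) * (\<Prod>j\<in>{1..k}. pmf (q (\<alpha>, j, prev_letter y m)) \<alpha>)"
  using assms(3)
proof (induction k)
  case (Suc k)
  have "ctx (past y (m + k)) = (\<alpha>, Suc k, prev_letter y m)"
    using Suc.prems by (intro ctx_past_run assms(2)) auto
  moreover have "y (Suc (m + k)) = \<alpha>"
    using Suc.prems by simp
  ultimately show ?case
    using measure_cylinder_Suc[of y "m + k", OF assms(1)] Suc by (simp add: prod.nat_ivl_Suc')
qed simp

lemma measure_cylinder_run_exit:
  assumes "y 0 = E" "prev_letter y m \<noteq> \<alpha>" "\<And>i. m \<le> i \<Longrightarrow> i \<le> m + k \<Longrightarrow> y i = \<alpha>"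
  shows "measure M (cylinder y (m + Suc k)) = measure M (cylinder y m) *
    ((\<Prod>j\<in>{1..k}. pmf (q (\<alpha>, j, prev_letter y m)) \<alpha>) * pmf (q (\<alpha>, Suc k, prev_letter y m)) (y (m + Suc k)))"
  using measure_cylinder_Suc[of y "m + k", OF assms(1)] measure_cylinder_run[OF assms] ctx_past_run[OF assms(2,3)]
  by simp

lemma cylinder_next_break_eq:
  assumes "brk y n = enat m" "\<gamma> \<noteq> y m" "m < l"
  shows "{\<omega> \<in> cylinder y m. brk (path \<omega>) (Suc n) = enat l \<and> bendJ (path \<omega>) (Suc n) = (y m, \<gamma>)}
    = cylinder (\<lambda>i. if i \<le> m then y i else if i < l then y m else \<gamma>) l"
proof (rule set_eqI)
  fix \<omega>
  have event: "brk (path \<omega>) (Suc n) = enat l \<and> bendJ (path \<omega>) (Suc n) = (y m, \<gamma>) \<longleftrightarrow>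
      (\<forall>i. m \<le> i \<longrightarrow> i < l \<longrightarrow> X i \<omega> = y m) \<and> X l \<omega> = \<gamma>"
    if "\<omega> \<in> cylinder y m"
  proof -
    have "X m \<omega> = y m"
      using that by (simp add: cylinder_def)
    moreover have "brk (path \<omega>) n = enat m"
      using that by (intro brk_eq_enat_if_prefix_eq[OF assms(1)]) (simp add: cylinder_def)
    ultimately show ?thesis
      using brk_bendJ_Suc_iff[of "path \<omega>" n m l "(y m, \<gamma>)"] assms(2,3) by auto
  qed
  have "\<omega> \<in> cylinder (\<lambda>i. if i \<le> m then y i else if i < l then y m else \<gamma>) l \<longleftrightarrow>
      \<omega> \<in> cylinder y m \<and> (\<forall>i. m \<le> i \<longrightarrow> i < l \<longrightarrow> X i \<omega> = y m) \<and> X l \<omega> = \<gamma>"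
    using assms(3) by (auto simp: cylinder_def split: if_splits)
  with event show "\<omega> \<in> {\<omega> \<in> cylinder y m. brk (path \<omega>) (Suc n) = enat l \<and> bendJ (path \<omega>) (Suc n) = (y m, \<gamma>)}
      \<longleftrightarrow> \<omega> \<in> cylinder (\<lambda>i. if i \<le> m then y i else if i < l then y m else \<gamma>) l"
    by blast
qed

lemma measure_next_break:
  assumes y0: "y 0 = E" and brk_y: "brk y n = enat m"
  shows "measure M {\<omega> \<in> cylinder y m. brk (path \<omega>) (Suc n) = enat l \<and> bendJ (path \<omega>) (Suc n) = b}
    = sm_kernel q (bendJ y n) b (l - m) * measure M (cylinder y m)"
proof -
  define \<alpha> \<beta> where "\<alpha> = y m" and "\<beta> = prev_letter y m"
  have J_y: "bendJ y n = (\<beta>, \<alpha>)" and "\<beta> \<noteq> \<alpha>"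
    using bendJ_eq_prev_letter[OF y0 brk_y] by (simp_all add: \<alpha>_def \<beta>_def)
  show ?thesis
  proof (cases "m < l \<and> fst b = \<alpha> \<and> snd b \<noteq> \<alpha>")
    case False
    have "\<not> (brk (path \<omega>) (Suc n) = enat l \<and> bendJ (path \<omega>) (Suc n) = b)" if "\<omega> \<in> cylinder y m" for \<omega>
    proof
      have "X m \<omega> = \<alpha>" and brk_\<omega>: "brk (path \<omega>) n = enat m"
        using that by (auto simp: cylinder_def \<alpha>_def intro: brk_eq_enat_if_prefix_eq[OF brk_y])
      assume "brk (path \<omega>) (Suc n) = enat l \<and> bendJ (path \<omega>) (Suc n) = b"
      then have "m < l" "X l \<omega> \<noteq> X m \<omega>" "b = (X m \<omega>, X l \<omega>)"
        using brk_bendJ_Suc_iff[OF brk_\<omega>, of l b] by blast+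
      with False \<open>X m \<omega> = \<alpha>\<close> show False
        by simp
    qed
    then have empty: "{\<omega> \<in> cylinder y m. brk (path \<omega>) (Suc n) = enat l \<and> bendJ (path \<omega>) (Suc n) = b} = {}"
      by blast
    have "sm_kernel q (bendJ y n) b (l - m) = 0"
      using False J_y by (auto simp: sm_kernel_def split: prod.split)
    then show ?thesis
      unfolding empty by simp
  next
    case True
    then obtain \<gamma> where b: "b = (\<alpha>, \<gamma>)" "\<gamma> \<noteq> \<alpha>"
      by (cases b) auto
    define k where "k = l - Suc m"
    have l: "l = m + Suc k"
      using True by (simp add: k_def)
    define z where "z = (\<lambda>i. if i \<le> m then y i else if i < l then y m else \<gamma>)"
    have z0: "z 0 = E" and prev_z: "prev_letter z m = \<beta>" and run_z: "\<And>i. m \<le> i \<Longrightarrow> i \<le> m + k \<Longrightarrow> z i = \<alpha>"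
      using y0 by (auto simp: z_def \<alpha>_def \<beta>_def prev_letter_def l)
    have "cylinder z m = cylinder y m"
      by (rule cylinder_cong) (simp add: z_def)
    moreover have "{\<omega> \<in> cylinder y m. brk (path \<omega>) (Suc n) = enat l \<and> bendJ (path \<omega>) (Suc n) = b}
        = cylinder z l"
      using cylinder_next_break_eq[OF brk_y, of \<gamma> l] b True unfolding z_def \<alpha>_def by simp
    moreover have "z (m + Suc k) = \<gamma>"
      by (simp add: z_def l)
    moreover have "sm_kernel q (bendJ y n) b (l - m)
        = (\<Prod>j\<in>{1..k}. pmf (q (\<alpha>, j, \<beta>)) \<alpha>) * pmf (q (\<alpha>, Suc k, \<beta>)) \<gamma>"
      using J_y b l \<open>\<beta> \<noteq> \<alpha>\<close> by (simp add: sm_kernel_def atLeastLessThanSuc_atLeastAtMost)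
    ultimately show ?thesis
      using measure_cylinder_run_exit[of z m \<alpha> k, OF z0 _ run_z] prev_z \<open>\<beta> \<noteq> \<alpha>\<close> l
      by (simp add: mult_ac)
  qed
qed

lemma null_sets_constant_after_brk:
  assumes w0: "w 0 = E" and brk_w: "brk w n = enat m"
  shows "(\<Inter>K. cylinder (\<lambda>i. if i \<le> m then w i else w m) (m + K)) \<in> null_sets M"
    (is "?N \<in> null_sets M")
proof -
  define \<alpha> \<beta> where "\<alpha> = w m" and "\<beta> = prev_letter w m"
  define z where "z = (\<lambda>i. if i \<le> m then w i else w m)"
  have "\<beta> \<noteq> \<alpha>"
    using bendJ_eq_prev_letter(2)[OF w0 brk_w] by (simp add: \<alpha>_def \<beta>_def)
  have z0: "z 0 = E" and prev_z: "prev_letter z m = \<beta>" and run_z: "\<And>i. m \<le> i \<Longrightarrow> z i = \<alpha>"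
    using w0 by (simp_all add: z_def prev_letter_def \<alpha>_def \<beta>_def)
  have cyl_z: "cylinder z m = cylinder w m"
    by (rule cylinder_cong) (simp add: z_def)
  have bound: "measure M ?N \<le> measure M (cylinder w m) * (\<Prod>j\<in>{1..K}. pmf (q (\<alpha>, j, \<beta>)) \<alpha>)" for K
  proof -
    have "measure M ?N \<le> measure M (cylinder z (m + K))"
      unfolding z_def by (rule finite_measure_mono) auto
    also have "\<dots> = measure M (cylinder w m) * (\<Prod>j\<in>{1..K}. pmf (q (\<alpha>, j, \<beta>)) \<alpha>)"
      using measure_cylinder_run[of z m \<alpha> K] z0 prev_z run_z cyl_z \<open>\<beta> \<noteq> \<alpha>\<close> by simp
    finally show ?thesis .
  qed
  have lim: "(\<lambda>K. measure M (cylinder w m) * (\<Prod>j\<in>{1..K}. pmf (q (\<alpha>, j, \<beta>)) \<alpha>))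
      \<longlonglongrightarrow> measure M (cylinder w m) * 0"
    using q_lim[of \<alpha> \<beta>] \<open>\<beta> \<noteq> \<alpha>\<close> by (intro tendsto_mult_left) auto
  have "measure M ?N \<le> measure M (cylinder w m) * 0"
    by (rule LIMSEQ_le_const[OF lim]) (use bound in blast)
  then have "measure M ?N = 0"
    using measure_nonneg[of M ?N] by simp
  then show ?thesis
    by (intro null_setsI) (auto simp: emeasure_eq_measure)
qed

lemma AE_next_brk_finite:
  "AE \<omega> in M. \<omega> \<in> cylinder y m \<longrightarrow> brk (path \<omega>) n = enat m \<longrightarrow> brk (path \<omega>) (Suc n) \<noteq> \<infinity>"
proof (cases "\<exists>\<omega>\<^sub>0 \<in> cylinder y m. brk (path \<omega>\<^sub>0) n = enat m")
  case False
  then show ?thesis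
    by (auto intro: AE_I2)
next
  case True
  then obtain w where w: "\<exists>\<omega>\<^sub>0 \<in> cylinder y m. w = path \<omega>\<^sub>0 \<and> brk w n = enat m"
    by blast
  then have w0: "w 0 = E" and brk_w: "brk w n = enat m" and cyl_w: "cylinder y m = cylinder w m"
    using X0 by (auto simp: cylinder_def)
  have "{\<omega> \<in> space M. \<not> (\<omega> \<in> cylinder y m \<longrightarrow> brk (path \<omega>) n = enat m
      \<longrightarrow> brk (path \<omega>) (Suc n) \<noteq> \<infinity>)} \<subseteq> (\<Inter>K. cylinder (\<lambda>i. if i \<le> m then w i else w m) (m + K))"
  proof
    fix \<omega>
    assume "\<omega> \<in> {\<omega> \<in> space M. \<not> (\<omega> \<in> cylinder y m \<longrightarrow> brk (path \<omega>) n = enat m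
      \<longrightarrow> brk (path \<omega>) (Suc n) \<noteq> \<infinity>)}"
    then have \<omega>: "\<omega> \<in> cylinder w m" "brk (path \<omega>) n = enat m" "brk (path \<omega>) (Suc n) = \<infinity>"
      using cyl_w by auto
    have "X i \<omega> = w m" if "m \<le> i" for i
      using const_between_brk[OF \<omega>(2) that] \<omega>(1,3) by (simp add: cylinder_def)
    then show "\<omega> \<in> (\<Inter>K. cylinder (\<lambda>i. if i \<le> m then w i else w m) (m + K))"
      using \<omega>(1) by (auto simp: cylinder_def)
  qed
  then show ?thesis
    by (rule AE_I'[OF null_sets_constant_after_brk[OF w0 brk_w]])
qed

lemma AE_brk_finite: "AE \<omega> in M. \<forall>n. brk (path \<omega>) n \<noteq> \<infinity>"
proof -
  have "AE \<omega> in M. brk (path \<omega>) n \<noteq> \<infinity>" for n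
  proof (induction n)
    case (Suc n)
    have "AE \<omega> in M. \<forall>y \<in> {..m} \<rightarrow>\<^sub>E UNIV.
        \<omega> \<in> cylinder y m \<longrightarrow> brk (path \<omega>) n = enat m \<longrightarrow> brk (path \<omega>) (Suc n) \<noteq> \<infinity>"
      for m :: nat
      using AE_next_brk_finite by (subst AE_ball_countable) (auto intro: countable_PiE)
    then have "AE \<omega> in M. \<forall>m. \<forall>y \<in> {..m} \<rightarrow>\<^sub>E UNIV.
        \<omega> \<in> cylinder y m \<longrightarrow> brk (path \<omega>) n = enat m \<longrightarrow> brk (path \<omega>) (Suc n) \<noteq> \<infinity>"
      by (subst AE_all_countable) blast
    with Suc.IH AE_space show ?case
    proof eventually_elim
      case (elim \<omega>)
      then obtain m where "brk (path \<omega>) n = enat m"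
        by auto
      moreover have "\<omega> \<in> cylinder (restrict (path \<omega>) {..m}) m"
        using elim by (simp add: cylinder_def)
      moreover have "restrict (path \<omega>) {..m} \<in> {..m} \<rightarrow>\<^sub>E UNIV"
        by (simp add: restrict_PiE_iff)
      ultimately show ?case
        using elim(3) by blast
    qed
  qed simp
  then show ?thesis
    by (simp add: AE_all_countable)
qed

lemma sets_brk_eq_enat: "{\<omega> \<in> space M. brk (path \<omega>) n = enat m} \<in> sets M"
proof -
  let ?Y = "{y \<in> {..m} \<rightarrow>\<^sub>E UNIV. brk y n = enat m}"
  have "{\<omega> \<in> space M. brk (path \<omega>) n = enat m} = (\<Union>y\<in>?Y. cylinder y m)"
  proof (intro equalityI subsetI)
    fix \<omega>
    assume \<omega>: "\<omega> \<in> {\<omega> \<in> space M. brk (path \<omega>) n = enat m}"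
    then have "brk (restrict (path \<omega>) {..m}) n = enat m"
      by (auto intro!: brk_eq_enat_if_prefix_eq[of "path \<omega>" n m "restrict (path \<omega>) {..m}"])
    moreover have "\<omega> \<in> cylinder (restrict (path \<omega>) {..m}) m"
      using \<omega> by (simp add: cylinder_def)
    moreover have "restrict (path \<omega>) {..m} \<in> {..m} \<rightarrow>\<^sub>E UNIV"
      by (simp add: restrict_PiE_iff)
    ultimately show "\<omega> \<in> (\<Union>y\<in>?Y. cylinder y m)"
      by blast
  next
    fix \<omega>
    assume "\<omega> \<in> (\<Union>y\<in>?Y. cylinder y m)"
    then obtain y where y: "brk y n = enat m" "\<omega> \<in> cylinder y m"
      by blast
    then show "\<omega> \<in> {\<omega> \<in> space M. brk (path \<omega>) n = enat m}"
      using brk_eq_enat_if_prefix_eq[OF y(1), of "path \<omega>"] by (auto simp: cylinder_def)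
  qed
  also have "\<dots> \<in> sets M"
  proof (rule sets.countable_UN')
    show "countable ?Y"
      by (rule countable_subset[OF Collect_restrict countable_PiE]) auto
  qed auto
  finally show ?thesis .
qed

lemma measurable_brk: "(\<lambda>\<omega>. brk (path \<omega>) n) \<in> M \<rightarrow>\<^sub>M count_space UNIV"
  unfolding measurable_count_space_eq2_countable
proof (intro conjI ballI)
  fix t :: enat
  have "(\<lambda>\<omega>. brk (path \<omega>) n) -` {t} \<inter> space M = {\<omega> \<in> space M. brk (path \<omega>) n = t}"
    by auto
  also have "\<dots> \<in> sets M"
  proof (cases t)
    case infinity
    then have "{\<omega> \<in> space M. brk (path \<omega>) n = t} = {\<omega> \<in> space M. \<forall>m. \<not> brk (path \<omega>) n = enat m}"
      by (simp add: not_enat_eq)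
    also have "\<dots> \<in> sets M"
      by (intro sets.sets_Collect_countable_All sets.sets_Collect_neg sets_brk_eq_enat)
    finally show ?thesis .
  qed (simp add: sets_brk_eq_enat)
  finally show "(\<lambda>\<omega>. brk (path \<omega>) n) -` {t} \<inter> space M \<in> sets M" .
qed simp

lemma measurable_bendJ: "(\<lambda>\<omega>. bendJ (path \<omega>) n) \<in> M \<rightarrow>\<^sub>M count_space UNIV"
proof -
  have "(\<lambda>\<omega>. at_time (path \<omega>) t) \<in> M \<rightarrow>\<^sub>M count_space UNIV" for t
    by (cases t) (simp_all add: at_time_def)
  then have at_brk: "(\<lambda>\<omega>. at_time (path \<omega>) (brk (path \<omega>) k)) \<in> M \<rightarrow>\<^sub>M count_space UNIV" for k
    by (rule measurable_compose_countable[where f = "\<lambda>t \<omega>. at_time (path \<omega>) t", OF _ measurable_brk])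
  show ?thesis
    using measurable_count_space_apply2[OF at_brk at_brk, of Pair "n - 1" n]
    by (cases n) (simp_all add: bendJ_def)
qed

lemma bendJ_brk_history_eq_cylinder:
  assumes "y 0 = E" "brk y n = enat m"
  shows "{\<omega> \<in> space M. \<forall>i\<le>n. (bendJ (path \<omega>) i, brk (path \<omega>) i) = (bendJ y i, brk y i)}
    = cylinder y m"
proof (rule set_eqI)
  fix \<omega>
  show "\<omega> \<in> {\<omega> \<in> space M. \<forall>i\<le>n. (bendJ (path \<omega>) i, brk (path \<omega>) i) = (bendJ y i, brk y i)}
      \<longleftrightarrow> \<omega> \<in> cylinder y m"
    using prefix_eq_iff_bendJ_brk_eq[of y "path \<omega>" n m, OF assms(1) _ assms(2)] X0[of \<omega>]
    by (auto simp: cylinder_def)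
qed

lemma measure_bendJ_brk_transition:
  assumes h: "\<forall>i\<le>n. h i \<in> bends \<times> range enat" and s: "s \<in> bends \<times> range enat"
  shows "measure M {\<omega> \<in> space M. (\<forall>i\<le>n. (bendJ (path \<omega>) i, brk (path \<omega>) i) = h i)
              \<and> (bendJ (path \<omega>) (Suc n), brk (path \<omega>) (Suc n)) = s}
    = additive_kernel (sm_kernel q) (h n) s
      * measure M {\<omega> \<in> space M. \<forall>i\<le>n. (bendJ (path \<omega>) i, brk (path \<omega>) i) = h i}"
    (is "measure M ?A = _ * measure M ?H")
proof (cases "?H = {}")
  case True
  moreover have "?A = {}"
    using True by blast
  ultimately show ?thesis
    by (simp only: measure_empty mult_zero_right)
next
  case False
  then obtain y where "\<exists>\<omega>\<^sub>0 \<in> ?H. y = path \<omega>\<^sub>0"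
    by blast
  then have y0: "y 0 = E" and h_y: "\<And>i. i \<le> n \<Longrightarrow> h i = (bendJ y i, brk y i)"
    using X0 by auto
  have "brk y n \<in> range enat"
    using h[rule_format, of n] h_y[of n] by auto
  then obtain m where brk_y: "brk y n = enat m"
    by auto
  obtain b l where s_eq: "s = (b, enat l)"
    using s by auto
  have H: "?H = cylinder y m"
    using bendJ_brk_history_eq_cylinder[OF y0 brk_y] h_y by auto
  then have "?A = {\<omega> \<in> cylinder y m. brk (path \<omega>) (Suc n) = enat l \<and> bendJ (path \<omega>) (Suc n) = b}"
    unfolding s_eq set_eq_iff by blast
  moreover have "additive_kernel (sm_kernel q) (h n) s = sm_kernel q (bendJ y n) b (l - m)"
    using h_y[of n] brk_y by (simp add: additive_kernel_def s_eq)
  ultimately show ?thesis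
    using measure_next_break[OF y0 brk_y] H by simp
qed

lemma markov_chain_bendJ_brk:
  "markov_chain_on M (bends \<times> range enat) (\<lambda>n \<omega>. (bendJ (path \<omega>) n, brk (path \<omega>) n))
     (additive_kernel (sm_kernel q))"
  unfolding markov_chain_on_def
proof (intro conjI allI impI)
  fix n
  show "(\<lambda>\<omega>. (bendJ (path \<omega>) n, brk (path \<omega>) n)) \<in> M \<rightarrow>\<^sub>M count_space UNIV"
    by (rule measurable_count_space_apply2[OF measurable_bendJ measurable_brk])
next
  show "AE \<omega> in M. \<forall>n. (bendJ (path \<omega>) n, brk (path \<omega>) n) \<in> bends \<times> range enat"
    using AE_brk_finite AE_space
  proof eventually_elim
    case (elim \<omega>)
    show ?case
    proof
      fix n
      obtain m where m: "brk (path \<omega>) n = enat m"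
        using elim(1) by auto
      then show "(bendJ (path \<omega>) n, brk (path \<omega>) n) \<in> bends \<times> range enat"
        using bendJ_eq_prev_letter[OF X0[OF elim(2)] m] by (simp add: bends_def)
    qed
  qed
qed (rule measure_bendJ_brk_transition)

end

theorem mainTheorem2:
  fixes M :: "'a measure"
    and X :: "nat \<Rightarrow> 'a \<Rightarrow> letter"
    and q :: "ctxw \<Rightarrow> letter pmf"
  assumes "prob_space M"
    and q_pos: "\<And>c \<gamma>. is_context c \<Longrightarrow> pmf (q c) \<gamma> > 0"
    and q_lim: "\<And>\<alpha> \<beta>. \<alpha> \<noteq> \<beta> \<Longrightarrow>
                  (\<lambda>n. \<Prod>k\<in>{1..n}. pmf (q (\<alpha>, k, \<beta>)) \<alpha>) \<longlonglongrightarrow> 0"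
    and X_meas: "\<And>n. X n \<in> M \<rightarrow>\<^sub>M count_space UNIV"
    and X0: "\<And>\<omega>. \<omega> \<in> space M \<Longrightarrow> X 0 \<omega> = E"
    and vlmc: "\<And>n x. x 0 = E \<Longrightarrow>
       measure M {\<omega> \<in> space M. \<forall>i\<le>n. X i \<omega> = x i}
         = (\<Prod>i<n. pmf (q (ctx (past x i))) (x (Suc i)))"
  shows "markov_renewal_chain M bends
           (\<lambda>n \<omega>. bendJ (\<lambda>i. X i \<omega>) n) (\<lambda>n \<omega>. soj (\<lambda>i. X i \<omega>) n) (sm_kernel q)
       \<and> (\<forall>\<omega> \<in> space M. semi_markov_assoc (bendJ (\<lambda>i. X i \<omega>))
              (soj (\<lambda>i. X i \<omega>)) (bendZ (\<lambda>i. X i \<omega>)))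
       \<and> markov_additive M bends
           (\<lambda>n \<omega>. bendJ (\<lambda>i. X i \<omega>) n) (\<lambda>n \<omega>. brk (\<lambda>i. X i \<omega>) n) (sm_kernel q)"
proof -
  interpret comb_vlmc M X q
    by (intro comb_vlmc.intro comb_vlmc_axioms.intro) (fact assms)+
  have additive: "markov_additive M bends
      (\<lambda>n \<omega>. bendJ (path \<omega>) n) (\<lambda>n \<omega>. brk (path \<omega>) n) (sm_kernel q)"
    by (rule markov_additiveI[OF _ brk_mono_Suc markov_chain_bendJ_brk])
      (simp add: sm_kernel_def split: prod.split)
  have "(\<lambda>n \<omega>. soj (path \<omega>) n)
      = (\<lambda>n \<omega>. if n = 0 then brk (path \<omega>) 0 else brk (path \<omega>) n - brk (path \<omega>) (n - 1))"
    by (simp add: soj_def fun_eq_iff)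
  then have "markov_renewal_chain M bends
      (\<lambda>n \<omega>. bendJ (path \<omega>) n) (\<lambda>n \<omega>. soj (path \<omega>) n) (sm_kernel q)"
    using additive unfolding markov_additive_def by simp
  moreover have "\<forall>\<omega> \<in> space M. semi_markov_assoc (bendJ (path \<omega>)) (soj (path \<omega>)) (bendZ (path \<omega>))"
    using X0 semi_markov_assoc_bendZ by simp
  ultimately show ?thesis
    using additive by blast
qed

end
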